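(* Let $r,s\in\mathbb{F}_2((x^{-1}))$ with $\deg(r)\ge0$ and $\deg(s)\ge0$. If $r\preccurlyeq_x s$, then $S(r)\preccurlyeq_x S(s)$. In particular, $\tau(r)\le\tau(s)$.
   Context: $\mathbb{F}_2((x^{-1}))$ is the field of formal series $\sum_{z\in\mathbb{Z}}a_zx^z$, $a_z\in\mathbb{F}_2$, with $a_z\ne0$ for only finitely many positive $z$; $\deg$ is the largest exponent with nonzero coefficient. The polynomial part is $[\sum a_zx^z]=\sum_{z\ge0}a_zx^z$. $S(r)=\frac{r}{x+1}$ if $[r](1)=0$ and $S(r)=\frac{xr}{x+1}$ if $[r](1)=1$. For $\deg(r)\ge0$, $\tau(r)$ is the least $k\in\mathbb{N}$ with $[S^k(r)]=1$. We write $r\preccurlyeq_x s$ if there exists an integer $n\ge0$ with $x^nr=s$. *)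

theory Defs
  imports "HOL-Library.Z2" "HOL-Computational_Algebra.Formal_Laurent_Series"
begin

text \<open>F_2((x^{-1})) is modelled as the Laurent series field bit fls in the
variable t = x^{-1}: the coefficient a_z of x^z is the coefficient of t^(-z).\<close>

type_synonym F2L = "bit fls"

definition xx :: F2L where "xx = fls_X_inv"

definition coeffx :: "F2L \<Rightarrow> int \<Rightarrow> bit" where
  "coeffx r z = fls_nth r (- z)"

text \<open>Degree in x: the largest z with a_z nonzero (meaningful for r nonzero).\<close>
definition degx :: "F2L \<Rightarrow> int" where
  "degx r = - fls_subdegree r"

definition polypart :: "F2L \<Rightarrow> bit poly" where
  "polypart r = (\<Sum>n\<le>nat (- fls_subdegree r). monom (coeffx r (int n)) n)"

definition S :: "F2L \<Rightarrow> F2L" where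
  "S r = (if poly (polypart r) 1 = 0 then r / (xx + 1) else (xx * r) / (xx + 1))"

definition tau :: "F2L \<Rightarrow> nat" where
  "tau r = (LEAST k. polypart ((S ^^ k) r) = 1)"

definition precx :: "F2L \<Rightarrow> F2L \<Rightarrow> bool" where
  "precx r s \<longleftrightarrow> (\<exists>n::nat. xx ^ n * r = s)"

end

(*
  If s = x^n r with n \<ge> 1, then S multiplies r and s by x^a/(x+1) and x^b/(x+1) with
  a, b \<in> {0,1}, so S s = x^(n+b-a) S r; hence S^k r \<preccurlyeq>_x S^k s for every k. Each
  application of S keeps the degree or lowers it by one, never below 0, and [q] = 1
  exactly when deg q = 0. Multiplication by x^m raises the degree, so when S^k s has
  degree 0 for k = \<tau>(s), so has S^k r, and \<tau>(r) \<le> \<tau>(s).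

  The substance is that \<tau>(s) is defined at all. If the degree d \<ge> 1 never dropped,
  every iterate G_k = S^k s would satisfy [G_k](1) = 1, i.e. G_k = (1 + x^-1) G_(k+1).
  Telescoping [G_k](1) = 1 shows that every G_(k+1) has constant coefficient 1, and the
  coefficients of x^j then obey a Pascal recurrence over F_2 which kills the coefficient
  of x^d in G_(d+1), contradicting deg G_(d+1) = d.
*)
theory Submission
  imports Defs
begin

unbundle fps_syntax
declare add_bit_eq_xor [simp del]

lemma bit_add_self [simp]: "(a::bit) + a = 0"
  by (simp flip: mult_2)

lemma bit_add_self_left [simp]: "(a::bit) + (a + b) = b"
  by (simp flip: add.assoc)

lemma xx_nonzero: "xx \<noteq> 0"
  by (simp add: xx_def)

lemma fls_subdegree_xx: "fls_subdegree xx = -1"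
  by (simp add: xx_def)

lemma fls_X_mult_xx: "fls_X * xx = 1"
  by (simp add: xx_def fls_X_times_conv_shift)

lemma xx_plus_1_nonzero: "xx + 1 \<noteq> 0"
proof
  assume "xx + 1 = 0"
  then have "(xx + 1) $$ (-1) = 0" by simp
  then show False by (simp add: xx_def)
qed

lemma fls_subdegree_xx_plus_1: "fls_subdegree (xx + 1) = -1"
  by (rule fls_subdegree_eqI) (auto simp: xx_def)

lemma degx_xx_power_mult: "r \<noteq> 0 \<Longrightarrow> degx (xx ^ n * r) = degx r + int n"
  by (simp add: degx_def xx_def)

lemma precx_imp_degx_le: "precx r s \<Longrightarrow> r \<noteq> 0 \<Longrightarrow> degx r \<le> degx s"
  by (auto simp: precx_def degx_xx_power_mult)

lemma coeffx_degx_nonzero: "r \<noteq> 0 \<Longrightarrow> coeffx r (degx r) \<noteq> 0"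
  by (simp add: coeffx_def degx_def)

lemma coeffx_above_degx: "degx r < z \<Longrightarrow> coeffx r z = 0"
  by (simp add: coeffx_def degx_def)

lemma coeff_polypart:
  "coeff (polypart r) n = (if int n \<le> degx r then coeffx r (int n) else 0)"
  by (auto simp: polypart_def coeff_sum coeff_monom coeffx_above_degx)
    (auto simp: degx_def)

lemma poly_polypart_1: "poly (polypart r) 1 = (\<Sum>n\<le>nat (degx r). coeffx r (int n))"
  by (simp only: polypart_def poly_sum poly_monom power_one mult_1_right degx_def)

lemma polypart_eq_1_iff: "polypart r = 1 \<longleftrightarrow> r \<noteq> 0 \<and> degx r = 0"
proof
  assume one: "polypart r = 1"
  then have "coeff (polypart r) 0 = 1"
    by simp
  then have "coeffx r 0 = 1"
    by (simp add: coeff_polypart split: if_splits)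
  then have "r \<noteq> 0" and "degx r \<ge> 0"
    by (auto simp: coeffx_def degx_def intro: fls_subdegree_leI)
  moreover have "coeff (polypart r) (nat (degx r)) \<noteq> 0"
    using calculation coeffx_degx_nonzero[of r] by (simp add: coeff_polypart)
  ultimately show "r \<noteq> 0 \<and> degx r = 0"
    using one by (auto simp: coeff_1 split: if_splits)
next
  assume "r \<noteq> 0 \<and> degx r = 0"
  then show "polypart r = 1"
    using coeffx_degx_nonzero[of r] by (intro poly_eqI) (auto simp: coeff_polypart coeff_1)
qed

lemma S_eq_xx_power_mult:
  "S r = xx ^ (if poly (polypart r) 1 = 0 then 0 else 1) * r / (xx + 1)"
  by (simp add: S_def)

lemma S_nonzero: "r \<noteq> 0 \<Longrightarrow> S r \<noteq> 0"
  using xx_nonzero xx_plus_1_nonzero by (simp add: S_def)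

lemma degx_S_odd: "r \<noteq> 0 \<Longrightarrow> poly (polypart r) 1 = 1 \<Longrightarrow> degx (S r) = degx r"
  using xx_nonzero xx_plus_1_nonzero
  by (simp add: S_def degx_def fls_divide_subdegree fls_subdegree_xx fls_subdegree_xx_plus_1)

lemma degx_S_even: "r \<noteq> 0 \<Longrightarrow> poly (polypart r) 1 = 0 \<Longrightarrow> degx (S r) = degx r - 1"
  using xx_plus_1_nonzero
  by (simp add: S_def degx_def fls_divide_subdegree fls_subdegree_xx_plus_1)

lemma degx_S_le: "r \<noteq> 0 \<Longrightarrow> degx (S r) \<le> degx r"
  by (cases "poly (polypart r) 1") (simp_all add: degx_S_odd degx_S_even)

lemma degx_S_nonneg:
  assumes "r \<noteq> 0" and "degx r \<ge> 0"
  shows "degx (S r) \<ge> 0"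
proof (cases "degx r = 0")
  case True
  with assms have "polypart r = 1"
    by (simp add: polypart_eq_1_iff)
  then have "poly (polypart r) 1 = 1"
    by simp
  with assms show ?thesis
    by (simp add: degx_S_odd)
next
  case False
  with assms show ?thesis
    by (cases "poly (polypart r) 1") (simp_all add: degx_S_odd degx_S_even)
qed

lemma funpow_S_nonzero: "r \<noteq> 0 \<Longrightarrow> (S ^^ k) r \<noteq> 0"
  by (induction k) (simp_all add: S_nonzero)

lemma degx_funpow_S_nonneg: "r \<noteq> 0 \<Longrightarrow> degx r \<ge> 0 \<Longrightarrow> degx ((S ^^ k) r) \<ge> 0"
  by (induction k) (simp_all add: degx_S_nonneg funpow_S_nonzero)

lemma degx_funpow_S_le: "r \<noteq> 0 \<Longrightarrow> degx ((S ^^ k) r) \<le> degx r"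
  by (induction k) (auto intro: order_trans[OF degx_S_le] simp: funpow_S_nonzero)

lemma precx_S: "precx r s \<Longrightarrow> precx (S r) (S s)"
proof -
  assume "precx r s"
  then obtain n where s: "s = xx ^ n * r"
    unfolding precx_def by auto
  define a where "a = (if poly (polypart r) 1 = 0 then 0 else 1 :: nat)"
  define b where "b = (if poly (polypart s) 1 = 0 then 0 else 1 :: nat)"
  show ?thesis
  proof (cases "n = 0")
    case True
    then show ?thesis
      using s by (auto simp: precx_def intro: exI[of _ 0])
  next
    case False
    then have "b + n = (b + n - a) + a"
      by (simp add: a_def)
    then have "xx ^ b * (xx ^ n * r) = xx ^ (b + n - a) * (xx ^ a * r)"
      by (metis power_add mult.assoc)
    then have "S s = xx ^ (b + n - a) * S r"
      by (simp add: S_eq_xx_power_mult a_def b_def s)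
    then show ?thesis
      unfolding precx_def by (intro exI[of _ "b + n - a"]) simp
  qed
qed

lemma precx_funpow_S: "precx r s \<Longrightarrow> precx ((S ^^ k) r) ((S ^^ k) s)"
  by (induction k) (simp_all add: precx_S)

lemma coeffx_one_plus_X_mult: "coeffx ((1 + fls_X) * f) z = coeffx f z + coeffx f (z + 1)"
proof -
  have "(1 + fls_X) * f = f + fls_shift (-1) f"
    by (simp add: distrib_right fls_X_times_conv_shift)
  then show ?thesis
    by (simp add: coeffx_def algebra_simps)
qed

lemma sum_coeffx_one_plus_X_mult:
  "(\<Sum>n\<le>N. coeffx ((1 + fls_X) * f) (int n)) = coeffx f 0 + coeffx f (int (Suc N))"
  by (induction N) (simp_all add: coeffx_one_plus_X_mult add.assoc)

lemma one_plus_X_mult_S_odd: "poly (polypart r) 1 = 1 \<Longrightarrow> (1 + fls_X) * S r = r"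
proof -
  assume "poly (polypart r) 1 = 1"
  moreover have "(1 + fls_X) * xx = xx + 1"
    by (simp add: distrib_right fls_X_mult_xx)
  ultimately show ?thesis
    using xx_plus_1_nonzero by (simp add: S_def mult.assoc[symmetric])
qed

lemma bit_difference_table_vanishes:
  fixes c :: "nat \<Rightarrow> nat \<Rightarrow> bit"
  assumes rec: "\<And>j k. c (Suc j) (Suc k) = c j k + c j (Suc k)"
    and const: "\<And>k. c 0 (Suc k) = c 0 1"
    and "0 < j" and "j < k"
  shows "c j k = 0"
  using assms(3,4)
proof (induction j arbitrary: k)
  case 0
  then show ?case by simp
next
  case (Suc j)
  then obtain k' where k: "k = Suc k'" and "j < k'"
    by (cases k) auto
  show ?case
  proof (cases "j = 0")
    case True
    with \<open>j < k'\<close> show ?thesis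
      unfolding k rec by (metis const Suc_pred bit_add_self)
  next
    case False
    with Suc.IH \<open>j < k'\<close> show ?thesis
      unfolding k rec by simp
  qed
qed

lemma degx_funpow_S_drops:
  assumes r: "r \<noteq> 0" and pos: "degx r > 0"
  shows "\<exists>k. degx ((S ^^ k) r) < degx r"
proof (rule ccontr)
  assume stuck: "\<not> ?thesis"
  define d where "d = nat (degx r)"
  define G where "G k = (S ^^ k) r" for k
  have G_Suc: "G (Suc k) = S (G k)" for k
    by (simp add: G_def)
  have G_nonzero: "G k \<noteq> 0" for k
    using r by (simp add: G_def funpow_S_nonzero)
  have degx_G: "degx (G k) = int d" for k
  proof -
    have "\<not> degx (G k) < degx r"
      using stuck by (auto simp: G_def)
    then show ?thesis
      using degx_funpow_S_le[OF r, of k] pos by (simp add: G_def d_def)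
  qed
  have G_odd: "poly (polypart (G k)) 1 = 1" for k
  proof (rule ccontr)
    assume "poly (polypart (G k)) 1 \<noteq> 1"
    then have "degx (G (Suc k)) = degx (G k) - 1"
      using G_nonzero degx_S_even by (simp add: G_Suc)
    then show False
      using degx_G by simp
  qed
  have G_rel: "(1 + fls_X) * G (Suc k) = G k" for k
    using G_odd by (simp add: G_Suc one_plus_X_mult_S_odd)
  define c where "c j k = coeffx (G k) (int j)" for j k
  have c_rec: "c (Suc j) (Suc k) = c j k + c j (Suc k)" for j k
  proof -
    have "c j k = coeffx ((1 + fls_X) * G (Suc k)) (int j)"
      by (simp add: c_def G_rel)
    also have "\<dots> = c j (Suc k) + c (Suc j) (Suc k)"
      unfolding coeffx_one_plus_X_mult c_def by (simp add: add.commute)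
    finally show ?thesis
      by (metis bit_add_self_left add.commute)
  qed
  \<comment> \<open>the parity [G k](1) telescopes to the constant coefficient of G (Suc k)\<close>
  have c_const: "c 0 (Suc k) = 1" for k
  proof -
    have "1 = poly (polypart (G k)) 1"
      using G_odd by simp
    also have "\<dots> = coeffx (G (Suc k)) 0 + coeffx (G (Suc k)) (int (Suc d))"
      using sum_coeffx_one_plus_X_mult[of "G (Suc k)" d]
      by (simp add: poly_polypart_1 degx_G G_rel)
    also have "coeffx (G (Suc k)) (int (Suc d)) = 0"
      by (simp add: coeffx_above_degx degx_G)
    finally show ?thesis
      by (simp add: c_def)
  qed
  have "c d (Suc d) = 0"
    using bit_difference_table_vanishes[of c, OF c_rec] c_const pos by (simp add: d_def)
  moreover have "c d (Suc d) \<noteq> 0"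
    using coeffx_degx_nonzero[OF G_nonzero] degx_G by (simp add: c_def)
  ultimately show False
    by contradiction
qed

lemma funpow_S_reaches_polypart_1:
  assumes "r \<noteq> 0" and "degx r \<ge> 0"
  shows "\<exists>k. polypart ((S ^^ k) r) = 1"
  using assms
proof (induction "nat (degx r)" arbitrary: r rule: less_induct)
  case less
  show ?case
  proof (cases "degx r = 0")
    case True
    with less.prems show ?thesis
      by (auto simp: polypart_eq_1_iff intro: exI[of _ 0])
  next
    case False
    with less.prems obtain k where k: "degx ((S ^^ k) r) < degx r"
      using degx_funpow_S_drops by force
    have nonzero: "(S ^^ k) r \<noteq> 0" and nonneg: "degx ((S ^^ k) r) \<ge> 0"
      using less.prems by (simp_all add: funpow_S_nonzero degx_funpow_S_nonneg)
    with k have "nat (degx ((S ^^ k) r)) < nat (degx r)"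
      by simp
    then obtain k' where "polypart ((S ^^ k') ((S ^^ k) r)) = 1"
      using less.hyps nonzero nonneg by blast
    then show ?thesis
      by (metis funpow_add comp_apply)
  qed
qed

lemma polypart_funpow_S_tau:
  "r \<noteq> 0 \<Longrightarrow> degx r \<ge> 0 \<Longrightarrow> polypart ((S ^^ tau r) r) = 1"
  unfolding tau_def using funpow_S_reaches_polypart_1 by (rule LeastI_ex)

theorem lemma2p4:
  fixes r s :: F2L
  assumes "r \<noteq> 0" and "s \<noteq> 0"
    and "degx r \<ge> 0" and "degx s \<ge> 0"
    and "precx r s"
  shows "precx (S r) (S s) \<and> tau r \<le> tau s"
proof
  show "precx (S r) (S s)"
    using assms(5) by (rule precx_S)
  let ?r = "(S ^^ tau s) r" and ?s = "(S ^^ tau s) s"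
  have "degx ?s = 0"
    using polypart_funpow_S_tau[of s] assms(2,4) by (simp add: polypart_eq_1_iff)
  moreover have "?r \<noteq> 0"
    using assms(1) by (rule funpow_S_nonzero)
  moreover have "degx ?r \<le> degx ?s"
    using precx_funpow_S[OF assms(5)] calculation(2) by (rule precx_imp_degx_le)
  moreover have "degx ?r \<ge> 0"
    using assms(1,3) by (rule degx_funpow_S_nonneg)
  ultimately have "polypart ?r = 1"
    by (simp add: polypart_eq_1_iff)
  then show "tau r \<le> tau s"
    unfolding tau_def by (rule Least_le)
qed

end
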